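(* Let $M$ be a finitely generated monoid and let $\Sigma \subset M$ be a finite generating subset of $M$. Then: (1) if $(M,\Sigma)$ satisfies the Weiss condition, then $M$ is sofic; (2) if $M$ is left-cancellative and sofic, then $(M,\Sigma)$ satisfies the Weiss condition.
   Context: For a finite set $\Sigma$, a $\Sigma$-labeled graph is a pair $\mathcal{G}=(V,E)$ with $E \subset V \times \Sigma \times V$ (loops and multiple edges allowed); it is finite if $V$ is finite. A path of length $n$ is a sequence of edges $(e_1,\dots,e_n)$ with the terminal vertex of $e_i$ equal to the initial vertex of $e_{i+1}$; the ball $B_r^{\mathcal{G}}(u)$ is the set of vertices $v$ for which there is a path of length $\le r$ from $u$ to $v$ (the length-$0$ path giving $u$ itself), regarded as the induced $\Sigma$-labeled subgraph (edges of $E$ with both endpoints in the ball) pointed at $u$. A pointed labeled graph isomorphism between pointed $\Sigma$-labeled graphs $(V,E,v_0)$ and $(V',E',v_0')$ is a bijection $\psi\colon V\to V'$ with $\psi(v_0)=v_0'$ such that $(u,\sigma,v)\in E$ iff $(\psi(u),\sigma,\psi(v))\in E'$. The Cayley graph $\mathcal{C}(M,\Sigma)$ has vertex set $M$ and edge set $\{(s,\sigma,s\sigma) : s \in M, \sigma \in \Sigma\}$; write $B_r(1_M)$ for the ball of radius $r$ about $1_M$ in it. Given a $\Sigma$-labeled graph $\mathcal{G}=(V,E)$ and $r \in \mathbb{N}$, let $V(r)$ be the set of vertices $v\in V$ for which there is a pointed labeled graph isomorphism from $B_r(1_M)$ (pointed at $1_M$) onto $B_r^{\mathcal{G}}(v)$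 (pointed at $v$). The pair $(M,\Sigma)$ satisfies the Weiss condition if for every $r \in \mathbb{N}$ and every $\delta>0$ there exists a finite $\Sigma$-labeled graph $\mathcal{G}=(V,E)$ with $|V(r)| \ge (1-\delta)|V|$. A monoid is left-cancellative if $st=st'$ implies $t=t'$. For a non-empty finite set $X$, $\mathrm{Map}(X)$ is the monoid of all maps $X\to X$ under composition with the Hamming metric $d_X(f,g)=|\{x : f(x)\ne g(x)\}|/|X|$. For finite $K\subset M$ and $\varepsilon,\alpha>0$, a map $\varphi\colon M\to\mathrm{Map}(X)$ is a $(K,\varepsilon)$-morphism if $d_X(\varphi(k_1k_2),\varphi(k_1)\varphi(k_2))\le\varepsilon$ for all $k_1,k_2\in K$ and $d_X(\varphi(1_M),\mathrm{Id}_X)\le\varepsilon$; it is $(K,\alpha)$-injective if $d_X(\varphi(k_1),\varphi(k_2))\ge\alpha$ for all distinct $k_1,k_2\in K$. $M$ is sofic if for every finite $K\subset M$ and $\varepsilon>0$ there are a non-empty finite set $X$ and a $(K,1-\varepsilon)$-injective $(K,\varepsilon)$-morphism $M\to\mathrm{Map}(X)$. *)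

theory Defs
  imports Main Complex_Main
begin

(* Sigma-labeled graphs are given by a vertex set V and an edge set E \<subseteq> V \<times> Sigma \<times> V. *)

primrec path_rel :: "('v \<times> 'l \<times> 'v) set \<Rightarrow> nat \<Rightarrow> 'v \<Rightarrow> 'v \<Rightarrow> bool" where
  "path_rel E 0 u v = (u = v)"
| "path_rel E (Suc n) u v = (\<exists>w l. (u, l, w) \<in> E \<and> path_rel E n w v)"

definition ball_verts :: "('v \<times> 'l \<times> 'v) set \<Rightarrow> nat \<Rightarrow> 'v \<Rightarrow> 'v set" where
  "ball_verts E r u = {v. \<exists>n\<le>r. path_rel E n u v}"

definition pointed_iso ::
  "('a \<Rightarrow> 'v) \<Rightarrow> 'a set \<Rightarrow> ('a \<times> 'l \<times> 'a) set \<Rightarrow> 'a \<Rightarrow>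
     'v set \<Rightarrow> ('v \<times> 'l \<times> 'v) set \<Rightarrow> 'v \<Rightarrow> bool" where
  "pointed_iso \<psi> A E a0 B E' b0 \<longleftrightarrow>
     bij_betw \<psi> A B \<and> \<psi> a0 = b0 \<and>
     (\<forall>u\<in>A. \<forall>v\<in>A. \<forall>l. (u, l, v) \<in> E \<longleftrightarrow> (\<psi> u, l, \<psi> v) \<in> E')"

definition cayley_edges :: "'a::monoid_mult set \<Rightarrow> ('a \<times> 'a \<times> 'a) set" where
  "cayley_edges \<Sigma> = {(s, \<sigma>, s * \<sigma>) | s \<sigma>. \<sigma> \<in> \<Sigma>}"

definition good_verts :: "'a::monoid_mult set \<Rightarrow> nat set \<Rightarrow> (nat \<times> 'a \<times> nat) set \<Rightarrow> nat \<Rightarrow> nat set" where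
  "good_verts \<Sigma> V E r = {v \<in> V. \<exists>\<psi>.
     pointed_iso \<psi> (ball_verts (cayley_edges \<Sigma>) r 1) (cayley_edges \<Sigma>) 1
                   (ball_verts E r v) E v}"

(* Weiss condition; finite graphs are taken with (nonempty) vertex sets of naturals *)
definition weiss_condition :: "'a::monoid_mult set \<Rightarrow> bool" where
  "weiss_condition \<Sigma> \<longleftrightarrow>
     (\<forall>r::nat. \<forall>\<delta>::real. \<delta> > 0 \<longrightarrow>
        (\<exists>V::nat set. \<exists>E. finite V \<and> V \<noteq> {} \<and> E \<subseteq> V \<times> \<Sigma> \<times> V \<and>
            real (card (good_verts \<Sigma> V E r)) \<ge> (1 - \<delta>) * real (card V)))"

definition hamming :: "nat set \<Rightarrow> (nat \<Rightarrow> nat) \<Rightarrow> (nat \<Rightarrow> nat) \<Rightarrow> real" where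
  "hamming X f g = real (card {x \<in> X. f x \<noteq> g x}) / real (card X)"

(* product in Map(X): maps act on the right, i.e. fg means "first f, then g"
   (the convention matching Cayley graph edges s -> s\<sigma>) *)
definition map_mult :: "(nat \<Rightarrow> nat) \<Rightarrow> (nat \<Rightarrow> nat) \<Rightarrow> (nat \<Rightarrow> nat)" where
  "map_mult f g = g \<circ> f"

definition is_morphism_approx :: "nat set \<Rightarrow> 'a::monoid_mult set \<Rightarrow> real \<Rightarrow> ('a \<Rightarrow> nat \<Rightarrow> nat) \<Rightarrow> bool" where
  "is_morphism_approx X K \<epsilon> \<phi> \<longleftrightarrow>
     (\<forall>k1\<in>K. \<forall>k2\<in>K. hamming X (\<phi> (k1 * k2)) (map_mult (\<phi> k1) (\<phi> k2)) \<le> \<epsilon>) \<and>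
     hamming X (\<phi> 1) id \<le> \<epsilon>"

definition is_injective_approx :: "nat set \<Rightarrow> 'a set \<Rightarrow> real \<Rightarrow> ('a \<Rightarrow> nat \<Rightarrow> nat) \<Rightarrow> bool" where
  "is_injective_approx X K \<alpha> \<phi> \<longleftrightarrow>
     (\<forall>k1\<in>K. \<forall>k2\<in>K. k1 \<noteq> k2 \<longrightarrow> hamming X (\<phi> k1) (\<phi> k2) \<ge> \<alpha>)"

(* sofic monoid (ambient type); finite sets X are taken inside nat, phi maps into Map(X) *)
definition sofic :: "'a::monoid_mult itself \<Rightarrow> bool" where
  "sofic _ \<longleftrightarrow>
     (\<forall>K::'a set. \<forall>\<epsilon>::real. finite K \<and> \<epsilon> > 0 \<longrightarrow>
        (\<exists>X::nat set. \<exists>\<phi>::'a \<Rightarrow> nat \<Rightarrow> nat.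
           finite X \<and> X \<noteq> {} \<and> (\<forall>m. \<phi> m ` X \<subseteq> X) \<and>
           is_injective_approx X K (1 - \<epsilon>) \<phi> \<and> is_morphism_approx X K \<epsilon> \<phi>))"

definition generates :: "'a::monoid_mult set \<Rightarrow> bool" where
  "generates \<Sigma> \<longleftrightarrow> (\<forall>m::'a. \<exists>xs. set xs \<subseteq> \<Sigma> \<and> m = prod_list xs)"

definition left_cancellative :: "'a::monoid_mult itself \<Rightarrow> bool" where
  "left_cancellative _ \<longleftrightarrow> (\<forall>s t t' :: 'a. s * t = s * t' \<longrightarrow> t = t')"

end

theory Submission
  imports Defs
begin

text \<open>
  At a vertex whose r-ball is pointed isomorphic to the Cayley ball of radius r, following the
  edges labelled by a word w of length at most r ends at the image of the product of w. So letting
  each element of the monoid act by following a fixed word for it reproduces right multiplication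
  on the ball at every such vertex; once r is twice the length of the words needed for K, the action
  is unital, multiplicative and injective on K there, and these vertices form a
  (1 - \<epsilon>)-fraction: a sofic approximation.

  Conversely, a sofic approximation \<phi> defines the graph with edges x \<rightarrow> \<phi> \<sigma> x. Where \<phi> is
  unital, multiplicative on the r-ball times \<Sigma> and injective on the (r + 1)-ball, the map
  k \<mapsto> \<phi> k x is a pointed isomorphism of the Cayley ball onto the r-ball of x. Each of these
  finitely many conditions fails on at most an \<epsilon>-fraction of the vertices, so a small \<epsilon> gives the
  Weiss condition.
\<close>

lemma path_rel_snoc:
  "path_rel E n u w \<Longrightarrow> (w, l, v) \<in> E \<Longrightarrow> path_rel E (Suc n) u v"
  by (induction n arbitrary: u) auto

lemma mem_cayley_edges:
  "(s, \<sigma>, t) \<in> cayley_edges \<Sigma> \<longleftrightarrow> \<sigma> \<in> \<Sigma> \<and> t = s * \<sigma>"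
  by (auto simp: cayley_edges_def)

lemma path_rel_cayley_edges:
  "path_rel (cayley_edges \<Sigma>) n u v \<longleftrightarrow>
     (\<exists>w. set w \<subseteq> \<Sigma> \<and> length w = n \<and> v = u * prod_list w)"
proof (induction n arbitrary: u)
  case 0
  then show ?case by auto
next
  case (Suc n)
  show ?case
  proof
    assume "path_rel (cayley_edges \<Sigma>) (Suc n) u v"
    then obtain l w where "l \<in> \<Sigma>" "set w \<subseteq> \<Sigma>" "length w = n" "v = u * l * prod_list w"
      using Suc.IH by (auto simp: mem_cayley_edges)
    then show "\<exists>w. set w \<subseteq> \<Sigma> \<and> length w = Suc n \<and> v = u * prod_list w"
      by (intro exI[of _ "l # w"]) (auto simp: mult.assoc)
  next
    assume "\<exists>w. set w \<subseteq> \<Sigma> \<and> length w = Suc n \<and> v = u * prod_list w"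
    then obtain l w where "l \<in> \<Sigma>" "set w \<subseteq> \<Sigma>" "length w = n" "v = u * l * prod_list w"
      by (auto simp: length_Suc_conv mult.assoc)
    then show "path_rel (cayley_edges \<Sigma>) (Suc n) u v"
      using Suc.IH by (auto simp: mem_cayley_edges)
  qed
qed

lemma ball_verts_cayley_edges:
  "ball_verts (cayley_edges \<Sigma>) r 1 = {prod_list w | w. set w \<subseteq> \<Sigma> \<and> length w \<le> r}"
  unfolding ball_verts_def path_rel_cayley_edges by auto

lemma finite_ball_verts_cayley_edges:
  assumes "finite \<Sigma>"
  shows "finite (ball_verts (cayley_edges \<Sigma>) r 1)"
proof -
  have "ball_verts (cayley_edges \<Sigma>) r 1 = prod_list ` {w. set w \<subseteq> \<Sigma> \<and> length w \<le> r}"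
    unfolding ball_verts_cayley_edges by auto
  then show ?thesis
    using finite_lists_length_le[OF assms] by simp
qed

lemma generates_obtains_words:
  assumes "generates \<Sigma>"
  obtains word where "\<And>m. set (word m) \<subseteq> \<Sigma>" "\<And>m. prod_list (word m) = m"
  using assms unfolding generates_def by metis

lemma hamming_le_if_eq_on:
  assumes "finite X" "X \<noteq> {}" "G \<subseteq> X" "(1 - d) * real (card X) \<le> real (card G)"
    and "\<And>x. x \<in> G \<Longrightarrow> f x = g x"
  shows "hamming X f g \<le> d"
proof -
  have "{x \<in> X. f x \<noteq> g x} \<subseteq> X - G"
    using assms(5) by auto
  then have "card {x \<in> X. f x \<noteq> g x} \<le> card X - card G"
    using assms(1,3) by (metis card_Diff_subset card_mono finite_Diff finite_subset)
  then have "real (card {x \<in> X. f x \<noteq> g x}) \<le> d * real (card X)"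
    using assms(4) card_mono[OF assms(1,3)] by (simp add: of_nat_diff algebra_simps)
  then show ?thesis
    unfolding hamming_def using assms(1,2) by (simp add: divide_le_eq card_gt_0_iff)
qed

lemma hamming_ge_if_neq_on:
  assumes "finite X" "X \<noteq> {}" "G \<subseteq> X" "(1 - d) * real (card X) \<le> real (card G)"
    and "\<And>x. x \<in> G \<Longrightarrow> f x \<noteq> g x"
  shows "1 - d \<le> hamming X f g"
proof -
  have "card G \<le> card {x \<in> X. f x \<noteq> g x}"
    using assms(1,3,5) by (intro card_mono) auto
  then have "(1 - d) * real (card X) \<le> real (card {x \<in> X. f x \<noteq> g x})"
    using assms(4) by linarith
  then show ?thesis
    unfolding hamming_def using assms(1,2) by (simp add: le_divide_eq card_gt_0_iff)
qed

lemma card_neq_le_hamming: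
  assumes "finite X" "hamming X f g \<le> \<epsilon>"
  shows "real (card {x \<in> X. f x \<noteq> g x}) \<le> \<epsilon> * real (card X)"
proof (cases "X = {}")
  case False
  then show ?thesis
    using assms unfolding hamming_def by (simp add: divide_le_eq card_gt_0_iff)
qed simp

lemma card_eq_le_hamming:
  assumes "finite X" "1 - \<epsilon> \<le> hamming X f g"
  shows "real (card {x \<in> X. f x = g x}) \<le> \<epsilon> * real (card X)"
proof (cases "X = {}")
  case False
  define D where "D = {x \<in> X. f x \<noteq> g x}"
  have "(1 - \<epsilon>) * real (card X) \<le> real (card D)"
    using assms False unfolding hamming_def D_def by (simp add: le_divide_eq card_gt_0_iff)
  moreover have "{x \<in> X. f x = g x} = X - D" "D \<subseteq> X"
    by (auto simp: D_def)
  moreover have "card (X - D) = card X - card D" "card D \<le> card X"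
    using assms(1) \<open>D \<subseteq> X\<close> by (auto intro: card_Diff_subset card_mono finite_subset)
  ultimately show ?thesis
    by (simp add: of_nat_diff algebra_simps)
qed simp

lemma card_UN_le_card_mult:
  assumes "finite I" "\<And>i. i \<in> I \<Longrightarrow> real (card (A i)) \<le> c"
  shows "real (card (\<Union>i\<in>I. A i)) \<le> real (card I) * c"
proof -
  have "real (card (\<Union>i\<in>I. A i)) \<le> (\<Sum>i\<in>I. real (card (A i)))"
    using card_UN_le[OF assms(1), of A] by (simp flip: of_nat_sum)
  also have "\<dots> \<le> real (card I) * c"
    using sum_mono[of I _ "\<lambda>_. c"] assms(2) by simp
  finally show ?thesis .
qed

subsection \<open>From the Weiss condition to soficity\<close>

definition edge_step :: "('v \<times> 'l \<times> 'v) set \<Rightarrow> 'v \<Rightarrow> 'l \<Rightarrow> 'v" where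
  "edge_step E y \<sigma> = (if \<exists>u. (y, \<sigma>, u) \<in> E then SOME u. (y, \<sigma>, u) \<in> E else y)"

lemma edge_step_mem:
  assumes "E \<subseteq> V \<times> \<Sigma> \<times> V" "y \<in> V"
  shows "edge_step E y \<sigma> \<in> V"
proof (cases "\<exists>u. (y, \<sigma>, u) \<in> E")
  case True
  then have "(y, \<sigma>, edge_step E y \<sigma>) \<in> E"
    unfolding edge_step_def by (simp add: someI_ex[of "\<lambda>u. (y, \<sigma>, u) \<in> E"])
  then show ?thesis
    using assms(1) by auto
qed (simp add: edge_step_def assms(2))

lemma foldl_edge_step_mem:
  "E \<subseteq> V \<times> \<Sigma> \<times> V \<Longrightarrow> y \<in> V \<Longrightarrow> foldl (edge_step E) y w \<in> V"
  by (induction w arbitrary: y) (auto simp: edge_step_mem)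

lemma foldl_edge_step_pointed_iso:
  assumes iso: "pointed_iso \<psi> (ball_verts (cayley_edges \<Sigma>) r 1) (cayley_edges \<Sigma>) 1
                  (ball_verts E r v) E v"
    and "set w \<subseteq> \<Sigma>" "length w \<le> r"
  shows "foldl (edge_step E) v w = \<psi> (prod_list w)"
proof -
  define C where "C = cayley_edges \<Sigma>"
  define B where "B = ball_verts C r 1"
  have edge_iff: "(a, l, b) \<in> C \<longleftrightarrow> (\<psi> a, l, \<psi> b) \<in> E" if "a \<in> B" "b \<in> B" for a b l
    using iso that unfolding pointed_iso_def B_def C_def by blast
  have ball: "ball_verts E r v = \<psi> ` B"
    using iso by (simp add: pointed_iso_def bij_betw_def B_def C_def)
  have "set w \<subseteq> \<Sigma> \<longrightarrow> length w \<le> r \<longrightarrow>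
    foldl (edge_step E) v w = \<psi> (prod_list w) \<and> path_rel E (length w) v (\<psi> (prod_list w))"
  proof (induction w rule: rev_induct)
    case Nil
    then show ?case
      using iso by (simp add: pointed_iso_def)
  next
    case (snoc \<sigma> w)
    show ?case
    proof (intro impI)
      assume w: "set (w @ [\<sigma>]) \<subseteq> \<Sigma>" "length (w @ [\<sigma>]) \<le> r"
      define p where "p = prod_list w"
      have IH: "foldl (edge_step E) v w = \<psi> p" "path_rel E (length w) v (\<psi> p)"
        using snoc w by (auto simp: p_def)
      have p: "p \<in> B" "p * \<sigma> \<in> B"
        unfolding B_def C_def ball_verts_cayley_edges p_def using w
        by (force, intro CollectI exI[of _ "w @ [\<sigma>]"], simp)
      have "(p, \<sigma>, p * \<sigma>) \<in> C"
        using w by (simp add: C_def mem_cayley_edges)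
      then have e: "(\<psi> p, \<sigma>, \<psi> (p * \<sigma>)) \<in> E"
        using edge_iff[OF p] by simp
      define u where "u = (SOME u. (\<psi> p, \<sigma>, u) \<in> E)"
      have u: "(\<psi> p, \<sigma>, u) \<in> E"
        unfolding u_def using e by (rule someI)
      \<comment> \<open>The chosen successor lies in the ball, so the isomorphism identifies it with p\<sigma>.\<close>
      have "u \<in> ball_verts E r v"
        unfolding ball_verts_def using path_rel_snoc[OF IH(2) u] w(2)
        by (intro CollectI exI[of _ "Suc (length w)"]) simp
      then obtain a where a: "a \<in> B" "u = \<psi> a"
        using ball by auto
      then have "(p, \<sigma>, a) \<in> C"
        using edge_iff[OF p(1) a(1)] u by simp
      then have "u = \<psi> (p * \<sigma>)"
        using a by (simp add: C_def mem_cayley_edges)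
      then have "edge_step E (\<psi> p) \<sigma> = \<psi> (p * \<sigma>)"
        using e unfolding edge_step_def u_def by auto
      then show "foldl (edge_step E) v (w @ [\<sigma>]) = \<psi> (prod_list (w @ [\<sigma>])) \<and>
          path_rel E (length (w @ [\<sigma>])) v (\<psi> (prod_list (w @ [\<sigma>])))"
        using IH path_rel_snoc[OF IH(2) e] by (simp add: p_def)
    qed
  qed
  then show ?thesis
    using assms(2,3) by blast
qed

lemma
  assumes good: "v \<in> good_verts \<Sigma> V E r"
    and word: "\<And>m. set (word m) \<subseteq> \<Sigma>" "\<And>m. prod_list (word m) = m"
  shows foldl_edge_step_word_one: "length (word 1) \<le> r \<Longrightarrow> foldl (edge_step E) v (word 1) = v"
    and foldl_edge_step_word_inj:
      "length (word a) \<le> r \<Longrightarrow> length (word b) \<le> r \<Longrightarrow> a \<noteq> b \<Longrightarrow>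
       foldl (edge_step E) v (word a) \<noteq> foldl (edge_step E) v (word b)"
    and foldl_edge_step_word_mult:
      "length (word a) + length (word b) \<le> r \<Longrightarrow> length (word (a * b)) \<le> r \<Longrightarrow>
       foldl (edge_step E) v (word (a * b)) =
       foldl (edge_step E) (foldl (edge_step E) v (word a)) (word b)"
proof -
  obtain \<psi> where iso: "pointed_iso \<psi> (ball_verts (cayley_edges \<Sigma>) r 1) (cayley_edges \<Sigma>) 1
                           (ball_verts E r v) E v"
    using good unfolding good_verts_def by blast
  then have inj: "inj_on \<psi> (ball_verts (cayley_edges \<Sigma>) r 1)"
    unfolding pointed_iso_def bij_betw_def by blast
  note action = foldl_edge_step_pointed_iso[OF iso]
  have in_ball: "m \<in> ball_verts (cayley_edges \<Sigma>) r 1" if "length (word m) \<le> r" for m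
    unfolding ball_verts_cayley_edges using word that by (intro CollectI exI[of _ "word m"]) simp
  have word_action: "foldl (edge_step E) v (word m) = \<psi> m" if "length (word m) \<le> r" for m
    using action[OF word(1) that] by (simp add: word(2))
  show "length (word 1) \<le> r \<Longrightarrow> foldl (edge_step E) v (word 1) = v"
    using word_action action[of "[]"] by simp
  show "length (word a) \<le> r \<Longrightarrow> length (word b) \<le> r \<Longrightarrow> a \<noteq> b \<Longrightarrow>
      foldl (edge_step E) v (word a) \<noteq> foldl (edge_step E) v (word b)"
    using word_action in_ball inj_onD[OF inj] by metis
  assume "length (word a) + length (word b) \<le> r" "length (word (a * b)) \<le> r"
  then have "foldl (edge_step E) v (word a @ word b) = \<psi> (a * b)"
    using action[of "word a @ word b"] word by simp
  then show "foldl (edge_step E) v (word (a * b)) =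
      foldl (edge_step E) (foldl (edge_step E) v (word a)) (word b)"
    using word_action[OF \<open>length (word (a * b)) \<le> r\<close>] by simp
qed

lemma sofic_if_weiss_condition:
  fixes \<Sigma> :: "'a::monoid_mult set"
  assumes "generates \<Sigma>" and weiss: "weiss_condition \<Sigma>"
  shows "sofic TYPE('a)"
  unfolding sofic_def
proof (intro allI impI, elim conjE)
  fix K :: "'a set" and \<epsilon> :: real
  assume "finite K" "\<epsilon> > 0"
  obtain word where word: "\<And>m. set (word m) \<subseteq> \<Sigma>" "\<And>m. prod_list (word m) = m"
    using generates_obtains_words[OF assms(1)] by blast
  define K' where "K' = insert 1 (K \<union> (\<lambda>(a, b). a * b) ` (K \<times> K))"
  define r where "r = 2 * Max ((\<lambda>m. length (word m)) ` K')"
  have "finite K'"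
    using \<open>finite K\<close> by (simp add: K'_def)
  then have len: "2 * length (word m) \<le> r" if "m \<in> K'" for m
    unfolding r_def using that by (simp add: Max_ge)
  have len_K: "length (word a) + length (word b) \<le> r" "length (word (a * b)) \<le> r"
    if "a \<in> K" "b \<in> K" for a b
  proof -
    have "a \<in> K'" "b \<in> K'" "a * b \<in> K'"
      using that by (auto simp: K'_def)
    then show "length (word a) + length (word b) \<le> r" "length (word (a * b)) \<le> r"
      using len[of a] len[of b] len[of "a * b"] by linarith+
  qed
  obtain V :: "nat set" and E where V: "finite V" "V \<noteq> {}" "E \<subseteq> V \<times> \<Sigma> \<times> V"
    and many_good: "(1 - \<epsilon>) * real (card V) \<le> real (card (good_verts \<Sigma> V E r))"
    using weiss[unfolded weiss_condition_def, rule_format, OF \<open>\<epsilon> > 0\<close>, of r] by blast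
  have good_subset: "good_verts \<Sigma> V E r \<subseteq> V"
    by (auto simp: good_verts_def)
  note hamming_le = hamming_le_if_eq_on[OF V(1,2) good_subset many_good]
  note hamming_ge = hamming_ge_if_neq_on[OF V(1,2) good_subset many_good]
  define \<phi> where "\<phi> m y = foldl (edge_step E) y (word m)" for m y
  show "\<exists>X \<phi>. finite X \<and> X \<noteq> {} \<and> (\<forall>m. \<phi> m ` X \<subseteq> X) \<and>
           is_injective_approx X K (1 - \<epsilon>) \<phi> \<and> is_morphism_approx X K \<epsilon> \<phi>"
  proof (intro exI conjI)
    show "\<forall>m. \<phi> m ` V \<subseteq> V"
      using foldl_edge_step_mem[OF V(3)] by (auto simp: \<phi>_def)
    show "is_injective_approx V K (1 - \<epsilon>) \<phi>"
      unfolding is_injective_approx_def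
    proof (intro ballI impI)
      fix a b assume "a \<in> K" "b \<in> K" "a \<noteq> b"
      then have "length (word a) \<le> r" "length (word b) \<le> r"
        using len_K(1)[of a b] by linarith+
      then show "1 - \<epsilon> \<le> hamming V (\<phi> a) (\<phi> b)"
        unfolding \<phi>_def using foldl_edge_step_word_inj[OF _ word] \<open>a \<noteq> b\<close> by (intro hamming_ge)
    qed
    show "is_morphism_approx V K \<epsilon> \<phi>"
      unfolding is_morphism_approx_def
    proof (intro ballI conjI)
      fix a b assume "a \<in> K" "b \<in> K"
      then show "hamming V (\<phi> (a * b)) (map_mult (\<phi> a) (\<phi> b)) \<le> \<epsilon>"
        unfolding \<phi>_def map_mult_def using foldl_edge_step_word_mult[OF _ word] len_K
        by (intro hamming_le) simp
    next
      have "length (word 1) \<le> r"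
        using len[of 1] by (simp add: K'_def)
      then show "hamming V (\<phi> 1) id \<le> \<epsilon>"
        unfolding \<phi>_def using foldl_edge_step_word_one[OF _ word] by (intro hamming_le) simp
    qed
  qed (use V in auto)
qed

subsection \<open>From soficity to the Weiss condition\<close>

definition action_edges :: "'v set \<Rightarrow> 'l set \<Rightarrow> ('l \<Rightarrow> 'v \<Rightarrow> 'v) \<Rightarrow> ('v \<times> 'l \<times> 'v) set" where
  "action_edges X \<Sigma> \<phi> = {(x, \<sigma>, \<phi> \<sigma> x) | x \<sigma>. x \<in> X \<and> \<sigma> \<in> \<Sigma>}"

lemma mem_action_edges:
  "(x, \<sigma>, y) \<in> action_edges X \<Sigma> \<phi> \<longleftrightarrow> x \<in> X \<and> \<sigma> \<in> \<Sigma> \<and> y = \<phi> \<sigma> x"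
  by (auto simp: action_edges_def)

lemma path_rel_action_edges:
  assumes "\<And>\<sigma>. \<phi> \<sigma> ` X \<subseteq> X" "u \<in> X"
  shows "path_rel (action_edges X \<Sigma> \<phi>) n u v \<longleftrightarrow>
    (\<exists>w. set w \<subseteq> \<Sigma> \<and> length w = n \<and> v = foldl (\<lambda>y \<sigma>. \<phi> \<sigma> y) u w)"
  using assms(2)
proof (induction n arbitrary: u)
  case 0
  then show ?case by auto
next
  case (Suc n)
  have "\<phi> l u \<in> X" for l
    using assms(1) Suc.prems by blast
  then have "path_rel (action_edges X \<Sigma> \<phi>) (Suc n) u v \<longleftrightarrow>
      (\<exists>l w. l \<in> \<Sigma> \<and> set w \<subseteq> \<Sigma> \<and> length w = n \<and> v = foldl (\<lambda>y \<sigma>. \<phi> \<sigma> y) (\<phi> l u) w)"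
    using Suc by (auto simp: action_edges_def)
  also have "\<dots> \<longleftrightarrow> (\<exists>w. set w \<subseteq> \<Sigma> \<and> length w = Suc n \<and> v = foldl (\<lambda>y \<sigma>. \<phi> \<sigma> y) u w)"
  proof
    assume "\<exists>l w. l \<in> \<Sigma> \<and> set w \<subseteq> \<Sigma> \<and> length w = n \<and> v = foldl (\<lambda>y \<sigma>. \<phi> \<sigma> y) (\<phi> l u) w"
    then obtain l w where "l \<in> \<Sigma>" "set w \<subseteq> \<Sigma>" "length w = n"
      "v = foldl (\<lambda>y \<sigma>. \<phi> \<sigma> y) (\<phi> l u) w"
      by blast
    then show "\<exists>w. set w \<subseteq> \<Sigma> \<and> length w = Suc n \<and> v = foldl (\<lambda>y \<sigma>. \<phi> \<sigma> y) u w"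
      by (intro exI[of _ "l # w"]) simp
  qed (force simp: length_Suc_conv)
  finally show ?case .
qed

lemma ball_verts_action_edges:
  fixes \<phi> :: "'a::monoid_mult \<Rightarrow> 'v \<Rightarrow> 'v"
  assumes maps_into: "\<And>\<sigma>. \<phi> \<sigma> ` X \<subseteq> X" and "x \<in> X"
    and unit: "\<phi> 1 x = x"
    and mult: "\<And>a \<sigma>. a \<in> ball_verts (cayley_edges \<Sigma>) r 1 \<Longrightarrow> \<sigma> \<in> \<Sigma> \<Longrightarrow> \<phi> (a * \<sigma>) x = \<phi> \<sigma> (\<phi> a x)"
  shows "ball_verts (action_edges X \<Sigma> \<phi>) r x = (\<lambda>k. \<phi> k x) ` ball_verts (cayley_edges \<Sigma>) r 1"
proof -
  have fold: "foldl (\<lambda>y \<sigma>. \<phi> \<sigma> y) x w = \<phi> (prod_list w) x" if "set w \<subseteq> \<Sigma>" "length w \<le> r" for w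
    using that
  proof (induction w rule: rev_induct)
    case (snoc \<sigma> w)
    then have "prod_list w \<in> ball_verts (cayley_edges \<Sigma>) r 1"
      unfolding ball_verts_cayley_edges by force
    with snoc show ?case
      using mult[of "prod_list w" \<sigma>] by simp
  qed (simp add: unit)
  have "ball_verts (action_edges X \<Sigma> \<phi>) r x =
      {v. \<exists>w. set w \<subseteq> \<Sigma> \<and> length w \<le> r \<and> v = foldl (\<lambda>y \<sigma>. \<phi> \<sigma> y) x w}"
    unfolding ball_verts_def path_rel_action_edges[OF maps_into \<open>x \<in> X\<close>] by auto
  also have "\<dots> = {v. \<exists>w. set w \<subseteq> \<Sigma> \<and> length w \<le> r \<and> v = \<phi> (prod_list w) x}"
    using fold by (intro Collect_cong ex_cong1) (metis (no_types))
  also have "\<dots> = (\<lambda>k. \<phi> k x) ` ball_verts (cayley_edges \<Sigma>) r 1"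
    unfolding ball_verts_cayley_edges by auto
  finally show ?thesis .
qed

lemma good_verts_action_edges:
  fixes \<phi> :: "'a::monoid_mult \<Rightarrow> nat \<Rightarrow> nat"
  assumes maps_into: "\<And>\<sigma>. \<phi> \<sigma> ` X \<subseteq> X" and "x \<in> X"
    and unit: "\<phi> 1 x = x"
    and mult: "\<And>a \<sigma>. a \<in> ball_verts (cayley_edges \<Sigma>) r 1 \<Longrightarrow> \<sigma> \<in> \<Sigma> \<Longrightarrow> \<phi> (a * \<sigma>) x = \<phi> \<sigma> (\<phi> a x)"
    and inj: "inj_on (\<lambda>k. \<phi> k x) (ball_verts (cayley_edges \<Sigma>) (Suc r) 1)"
  shows "x \<in> good_verts \<Sigma> X (action_edges X \<Sigma> \<phi>) r"
proof -
  define C where "C = cayley_edges \<Sigma>"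
  define E where "E = action_edges X \<Sigma> \<phi>"
  define B where "B = ball_verts C r 1"
  have B_Suc: "B \<subseteq> ball_verts C (Suc r) 1"
    by (force simp: B_def C_def ball_verts_cayley_edges)
  have mult_Suc: "u * \<sigma> \<in> ball_verts C (Suc r) 1" if "u \<in> B" "\<sigma> \<in> \<Sigma>" for u \<sigma>
  proof -
    obtain w where "set w \<subseteq> \<Sigma>" "length w \<le> r" "u = prod_list w"
      using \<open>u \<in> B\<close> unfolding B_def C_def ball_verts_cayley_edges by blast
    with \<open>\<sigma> \<in> \<Sigma>\<close> show ?thesis
      unfolding C_def ball_verts_cayley_edges by (intro CollectI exI[of _ "w @ [\<sigma>]"]) simp
  qed
  have edge_iff: "(u, l, v) \<in> C \<longleftrightarrow> (\<phi> u x, l, \<phi> v x) \<in> E" if "u \<in> B" "v \<in> B" for u v l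
  proof (cases "l \<in> \<Sigma>")
    case True
    have "\<phi> u x \<in> X"
      using maps_into \<open>x \<in> X\<close> by blast
    then have "(\<phi> u x, l, \<phi> v x) \<in> E \<longleftrightarrow> \<phi> v x = \<phi> (u * l) x"
      using True mult[of u l] \<open>u \<in> B\<close> by (simp add: E_def B_def C_def mem_action_edges)
    also have "\<dots> \<longleftrightarrow> v = u * l"
      using inj_on_eq_iff[OF inj[folded C_def]] B_Suc \<open>v \<in> B\<close> mult_Suc[OF \<open>u \<in> B\<close> True]
      by blast
    finally show ?thesis
      using True by (simp add: C_def mem_cayley_edges)
  qed (simp add: C_def E_def mem_cayley_edges mem_action_edges)
  have "bij_betw (\<lambda>k. \<phi> k x) B (ball_verts E r x)"
    using inj_on_subset[OF inj[folded C_def] B_Suc]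
      ball_verts_action_edges[OF maps_into \<open>x \<in> X\<close> unit mult]
    by (simp add: bij_betw_def B_def C_def E_def)
  then have "pointed_iso (\<lambda>k. \<phi> k x) B C 1 (ball_verts E r x) E x"
    unfolding pointed_iso_def using edge_iff unit by blast
  then show ?thesis
    using \<open>x \<in> X\<close> unfolding good_verts_def B_def C_def E_def by blast
qed

definition exceptional_verts ::
  "'a::monoid_mult set \<Rightarrow> 'a set \<Rightarrow> nat set \<Rightarrow> ('a \<Rightarrow> nat \<Rightarrow> nat) \<Rightarrow> nat set" where
  "exceptional_verts \<Sigma> B X \<phi> = {x \<in> X. \<phi> 1 x \<noteq> x \<or> (\<exists>a\<in>B. \<exists>\<sigma>\<in>\<Sigma>. \<phi> (a * \<sigma>) x \<noteq> \<phi> \<sigma> (\<phi> a x))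
                                     \<or> \<not> inj_on (\<lambda>k. \<phi> k x) B}"

lemma card_exceptional_verts_le:
  fixes \<phi> :: "'a::monoid_mult \<Rightarrow> nat \<Rightarrow> nat"
  assumes "finite X" "finite B" "\<Sigma> \<subseteq> B"
    and inj: "is_injective_approx X B (1 - \<epsilon>) \<phi>" and mor: "is_morphism_approx X B \<epsilon> \<phi>"
  shows "real (card (exceptional_verts \<Sigma> B X \<phi>))
         \<le> real (1 + card B * card \<Sigma> + card B * card B) * (\<epsilon> * real (card X))"
proof -
  define c where "c = \<epsilon> * real (card X)"
  define P where "P = {p \<in> B \<times> B. fst p \<noteq> snd p}"
  define A1 where "A1 = {x \<in> X. \<phi> 1 x \<noteq> id x}"
  define A2 where "A2 = (\<Union>p\<in>B \<times> \<Sigma>. {x \<in> X. \<phi> (fst p * snd p) x \<noteq> map_mult (\<phi> (fst p)) (\<phi> (snd p)) x})"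
  define A3 where "A3 = (\<Union>p\<in>P. {x \<in> X. \<phi> (fst p) x = \<phi> (snd p) x})"
  have one: "hamming X (\<phi> 1) id \<le> \<epsilon>"
    using mor by (simp add: is_morphism_approx_def)
  then have "real (card A1) \<le> c"
    unfolding A1_def c_def by (rule card_neq_le_hamming[OF \<open>finite X\<close>])
  moreover have "real (card A2) \<le> real (card (B \<times> \<Sigma>)) * c"
    unfolding A2_def c_def
  proof (rule card_UN_le_card_mult)
    show "finite (B \<times> \<Sigma>)"
      using assms(2,3) finite_subset by blast
  next
    fix p assume "p \<in> B \<times> \<Sigma>"
    then show "real (card {x \<in> X. \<phi> (fst p * snd p) x \<noteq> map_mult (\<phi> (fst p)) (\<phi> (snd p)) x})
        \<le> \<epsilon> * real (card X)"
      using mor assms(3) card_neq_le_hamming[OF \<open>finite X\<close>]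
      unfolding is_morphism_approx_def by (metis SigmaE prod.sel subsetD)
  qed
  moreover have "real (card A3) \<le> real (card P) * c"
    unfolding A3_def c_def
  proof (rule card_UN_le_card_mult)
    show "finite P"
      using assms(2) by (simp add: P_def)
  next
    fix p assume "p \<in> P"
    then show "real (card {x \<in> X. \<phi> (fst p) x = \<phi> (snd p) x}) \<le> \<epsilon> * real (card X)"
      using inj card_eq_le_hamming[OF \<open>finite X\<close>]
      unfolding is_injective_approx_def P_def by auto
  qed
  moreover have "real (card P) * c \<le> real (card B * card B) * c"
  proof (rule mult_right_mono)
    show "real (card P) \<le> real (card B * card B)"
      using assms(2) card_mono[of "B \<times> B" P] unfolding of_nat_le_iff
      by (auto simp: P_def card_cartesian_product)
    show "c \<ge> 0"
      using order.trans[OF _ one, of 0] by (simp add: c_def hamming_def)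
  qed
  moreover have "exceptional_verts \<Sigma> B X \<phi> \<subseteq> A1 \<union> A2 \<union> A3"
    by (auto simp: exceptional_verts_def A1_def A2_def A3_def P_def map_mult_def inj_on_def)
  then have "card (exceptional_verts \<Sigma> B X \<phi>) \<le> card A1 + card A2 + card A3"
  proof -
    have "finite (A1 \<union> A2 \<union> A3)"
      using \<open>finite X\<close> by (rule finite_subset[rotated]) (auto simp: A1_def A2_def A3_def)
    then have "card (exceptional_verts \<Sigma> B X \<phi>) \<le> card (A1 \<union> A2 \<union> A3)"
      using \<open>_ \<subseteq> A1 \<union> A2 \<union> A3\<close> by (rule card_mono)
    then show ?thesis
      using card_Un_le[of "A1 \<union> A2" A3] card_Un_le[of A1 A2] by linarith
  qed
  ultimately show ?thesis
    unfolding c_def by (simp add: card_cartesian_product distrib_right)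
qed

lemma weiss_condition_if_sofic:
  fixes \<Sigma> :: "'a::monoid_mult set"
  assumes "finite \<Sigma>" and sofic: "sofic TYPE('a)"
  shows "weiss_condition \<Sigma>"
  unfolding weiss_condition_def
proof (intro allI impI)
  fix r :: nat and \<delta> :: real
  assume "\<delta> > 0"
  define B where "B = ball_verts (cayley_edges \<Sigma>) (Suc r) 1"
  define N where "N = 1 + card B * card \<Sigma> + card B * card B"
  have "finite B"
    unfolding B_def by (rule finite_ball_verts_cayley_edges[OF assms(1)])
  have "\<Sigma> \<subseteq> B"
  proof
    fix \<sigma> assume "\<sigma> \<in> \<Sigma>"
    then show "\<sigma> \<in> B"
      unfolding B_def ball_verts_cayley_edges by (intro CollectI exI[of _ "[\<sigma>]"]) simp
  qed
  have ball_B: "ball_verts (cayley_edges \<Sigma>) r 1 \<subseteq> B"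
    unfolding B_def ball_verts_cayley_edges by force
  have "real N \<ge> 1"
    by (simp add: N_def)
  then obtain X :: "nat set" and \<phi> :: "'a \<Rightarrow> nat \<Rightarrow> nat"
    where X: "finite X" "X \<noteq> {}" and maps_into: "\<And>m. \<phi> m ` X \<subseteq> X"
      and inj: "is_injective_approx X B (1 - \<delta> / real N) \<phi>"
      and mor: "is_morphism_approx X B (\<delta> / real N) \<phi>"
    using sofic[unfolded sofic_def, rule_format, of B "\<delta> / real N"] \<open>finite B\<close> \<open>\<delta> > 0\<close> by auto
  define Bad where "Bad = exceptional_verts \<Sigma> B X \<phi>"
  have "real (card Bad) \<le> real N * (\<delta> / real N * real (card X))"
    using card_exceptional_verts_le[OF X(1) \<open>finite B\<close> \<open>\<Sigma> \<subseteq> B\<close> inj mor]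
    unfolding Bad_def by (simp only: N_def)
  then have card_Bad: "real (card Bad) \<le> \<delta> * real (card X)"
    using \<open>real N \<ge> 1\<close> by simp
  have good: "X - Bad \<subseteq> good_verts \<Sigma> X (action_edges X \<Sigma> \<phi>) r"
  proof
    fix x assume "x \<in> X - Bad"
    then show "x \<in> good_verts \<Sigma> X (action_edges X \<Sigma> \<phi>) r"
      using ball_B by (intro good_verts_action_edges[OF maps_into])
        (auto simp: Bad_def B_def exceptional_verts_def)
  qed
  show "\<exists>V E. finite V \<and> V \<noteq> {} \<and> E \<subseteq> V \<times> \<Sigma> \<times> V \<and>
      (1 - \<delta>) * real (card V) \<le> real (card (good_verts \<Sigma> V E r))"
  proof (intro exI conjI)
    show "action_edges X \<Sigma> \<phi> \<subseteq> X \<times> \<Sigma> \<times> X"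
      using maps_into by (auto simp: action_edges_def)
    have "finite (good_verts \<Sigma> X (action_edges X \<Sigma> \<phi>) r)"
      using X(1) by (auto simp: good_verts_def)
    then have "card (X - Bad) \<le> card (good_verts \<Sigma> X (action_edges X \<Sigma> \<phi>) r)"
      using good by (rule card_mono)
    moreover have "card X - card Bad \<le> card (X - Bad)"
      by (rule diff_card_le_card_Diff) (use X(1) in \<open>simp add: Bad_def exceptional_verts_def\<close>)
    ultimately show "(1 - \<delta>) * real (card X) \<le> real (card (good_verts \<Sigma> X (action_edges X \<Sigma> \<phi>) r))"
      using card_Bad by (simp add: algebra_simps)
  qed (use X in auto)
qed

theorem theorem6p1:
  fixes \<Sigma> :: "'a::monoid_mult set"
  assumes "finite \<Sigma>" and "generates \<Sigma>"
  shows "(weiss_condition \<Sigma> \<longrightarrow> sofic TYPE('a))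
       \<and> (left_cancellative TYPE('a) \<and> sofic TYPE('a) \<longrightarrow> weiss_condition \<Sigma>)"
  using sofic_if_weiss_condition[OF assms(2)] weiss_condition_if_sofic[OF assms(1)] by blast

end
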